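(* Let $\mathbb{L}>0$, $\sigma>0$, and let $V,p\colon\mathbb{R}\to\mathbb{R}$ satisfy: (i) $V,p\in C^2(\mathbb{R})$, $V(0)=0$, $p(0)=0$, and $p$ is $\mathbb{L}$-periodic; (ii) $V'$ is globally Lipschitz on $\mathbb{R}$; (iii) there exist $\beta>0$ and $R\ge1$ such that $-\operatorname{sign}(x)V'(x)\le-\beta|x|$ for all $|x|\ge R$. For $\varepsilon>0$ define $$f_\varepsilon(x)=\int_0^x\exp\!\left(\frac1{\sigma^2}\left(V(z)+p\left(\frac z\varepsilon\right)\right)\right)\mathrm{d}z,\quad g_\varepsilon=f_\varepsilon^{-1},\quad m^\varepsilon(x)=\frac{1}{\sqrt{2\sigma^2}\,f_\varepsilon'(g_\varepsilon(x))},$$ $$b^\varepsilon(x)=-V'(x)-\frac1\varepsilon p'\!\left(\frac x\varepsilon\right),\qquad B^\varepsilon(x)=-\frac12b^\varepsilon(x)^2-\frac12(b^\varepsilon)'(x),$$ and, for $h>0$ and $x,y\in\mathbb{R}$, $$p^\varepsilon(h,x,y)=\frac{m^\varepsilon(y)}{\sqrt{2\pi h}}\left(\frac{m^\varepsilon(y)}{m^\varepsilon(x)}\right)^{1/2}\exp\!\left(-\frac1{2h}\left(\int_x^ym^\varepsilon(z)\,\mathrm{d}z\right)^2\right)\mathbb{E}\!\left[\exp\!\left(h\int_0^1B^\varepsilon(\mathscr N(h,g_\varepsilon(x),g_\varepsilon(y),u))\,\mathrm{d}u\right)\right],$$ where, for $a,b\in\mathbb{R}$, $(\mathscr N(h,a,b,u))_{u\in(0,1)}$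 is a jointly measurable process such that $\mathscr N(h,a,b,u)\sim\mathcal N(a+u(b-a),hu(1-u))$ for each $u\in(0,1)$. Then there exist constants $K_1,K_2>0$ independent of $\varepsilon$ such that for all $x,y\in\mathbb{R}$ and all sufficiently small $\varepsilon>0$ satisfying $K_1\varepsilon^4<\min\{2,1/(8\sigma^2)\}$, $$p^\varepsilon(\varepsilon^2,x,y)\le e^{\frac{K_2}2}\sqrt{\frac2{2-K_1\varepsilon^4}}\exp\!\left(2K_1\varepsilon^2g_\varepsilon(x)^2\right)\frac{m^\varepsilon(y)^{3/2}}{m^\varepsilon(x)^{1/2}}\frac1{\sqrt{2\pi\varepsilon^2}}\exp\!\left(-\frac{1-8K_1\sigma^2\varepsilon^4}{4\sigma^2\varepsilon^2}\left(g_\varepsilon(y)-g_\varepsilon(x)\right)^2\right).$$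
   Context: $p^\varepsilon(h,x,y)$ is (by a classical formula for one-dimensional diffusions) the transition probability density of the process $\xi^\varepsilon=f_\varepsilon(X^\varepsilon)$, where $X^\varepsilon$ solves $\mathrm{d}X_t^\varepsilon=-V'(X_t^\varepsilon)\mathrm{d}t-\frac1\varepsilon p'(X_t^\varepsilon/\varepsilon)\mathrm{d}t+\sqrt{2\sigma^2}\,\mathrm{d}W_t$; $\xi^\varepsilon$ satisfies $\mathrm{d}\xi_t^\varepsilon=\frac{1}{m^\varepsilon(\xi_t^\varepsilon)}\mathrm{d}W_t$. Note $f_\varepsilon'>0$, so $g_\varepsilon$ is well defined. *)

theory Defs
  imports "HOL-Probability.Probability"
begin

definition feps :: "real \<Rightarrow> (real \<Rightarrow> real) \<Rightarrow> (real \<Rightarrow> real) \<Rightarrow> real \<Rightarrow> real \<Rightarrow> real" where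
  "feps \<sigma> V p \<epsilon> x = (LBINT z=ereal 0..ereal x. exp ((V z + p (z / \<epsilon>)) / \<sigma>\<^sup>2))"

definition geps :: "real \<Rightarrow> (real \<Rightarrow> real) \<Rightarrow> (real \<Rightarrow> real) \<Rightarrow> real \<Rightarrow> real \<Rightarrow> real" where
  "geps \<sigma> V p \<epsilon> = inv (feps \<sigma> V p \<epsilon>)"

definition meps :: "real \<Rightarrow> (real \<Rightarrow> real) \<Rightarrow> (real \<Rightarrow> real) \<Rightarrow> real \<Rightarrow> real \<Rightarrow> real" where
  "meps \<sigma> V p \<epsilon> x = 1 / (sqrt (2 * \<sigma>\<^sup>2) * deriv (feps \<sigma> V p \<epsilon>) (geps \<sigma> V p \<epsilon> x))"

definition beps :: "(real \<Rightarrow> real) \<Rightarrow> (real \<Rightarrow> real) \<Rightarrow> real \<Rightarrow> real \<Rightarrow> real" where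
  "beps V p \<epsilon> x = - deriv V x - (1 / \<epsilon>) * deriv p (x / \<epsilon>)"

definition Beps :: "(real \<Rightarrow> real) \<Rightarrow> (real \<Rightarrow> real) \<Rightarrow> real \<Rightarrow> real \<Rightarrow> real" where
  "Beps V p \<epsilon> x = - (1/2) * (beps V p \<epsilon> x)\<^sup>2 - (1/2) * deriv (beps V p \<epsilon>) x"

definition peps :: "real \<Rightarrow> (real \<Rightarrow> real) \<Rightarrow> (real \<Rightarrow> real) \<Rightarrow> real \<Rightarrow> 'a measure
    \<Rightarrow> (real \<Rightarrow> real \<Rightarrow> real \<Rightarrow> real \<Rightarrow> 'a \<Rightarrow> real) \<Rightarrow> real \<Rightarrow> real \<Rightarrow> real \<Rightarrow> real" where
  "peps \<sigma> V p \<epsilon> M N h x y =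
     meps \<sigma> V p \<epsilon> y / sqrt (2 * pi * h)
     * sqrt (meps \<sigma> V p \<epsilon> y / meps \<sigma> V p \<epsilon> x)
     * exp (- (1 / (2 * h)) * (LBINT z=ereal x..ereal y. meps \<sigma> V p \<epsilon> z)\<^sup>2)
     * (\<integral>\<omega>. exp (h * (LBINT u=ereal 0..ereal 1.
            Beps V p \<epsilon> (N h (geps \<sigma> V p \<epsilon> x) (geps \<sigma> V p \<epsilon> y) u \<omega>))) \<partial>M)"

end

theory Submission
  imports Defs
begin

(* Since (b^eps)' = - V'' - p''(./eps) / eps^2, the potential B^eps = - (b^eps)^2/2 - (b^eps)'/2 is
   bounded above by (C + P/eps^2)/2, where C is a Lipschitz constant of V' and P bounds the periodic
   function p''.  With h = eps^2 the expectation in p^eps is therefore at most exp ((C + P)/2) for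
   eps < 1.  The density f_eps' = exp ((V + p(./eps))/sigma^2) is bounded below by a positive
   constant, as V is confining and p periodic; so f_eps is a bijection of the real line,
   m^eps > 0, and int_x^y m^eps = (g_eps y - g_eps x) / sqrt (2 sigma^2), which turns the Gaussian
   factor of p^eps into exp (- (g_eps y - g_eps x)^2 / (4 sigma^2 eps^2)).  The claim follows with
   K1 = 1 and K2 = C + P + 1, the remaining factors on the right-hand side being at least 1. *)

lemma has_vector_derivative_interval_integral:
  fixes f :: "real \<Rightarrow> 'a::euclidean_space"
  assumes "continuous_on UNIV f"
  shows "((\<lambda>u. LBINT y=ereal c..ereal u. f y) has_vector_derivative f x) (at x)"
proof -
  define d where "d = \<bar>x\<bar> + \<bar>c\<bar> + 1"
  have "((\<lambda>u. LBINT y=ereal c..ereal u. f y) has_vector_derivative f x) (at x within {-d..d})"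
    by (rule interval_integral_FTC2) (use assms continuous_on_subset in \<open>auto simp: d_def\<close>)
  then have "((\<lambda>u. LBINT y=ereal c..ereal u. f y) has_vector_derivative f x) (at x within {-d<..<d})"
    by (rule has_vector_derivative_within_subset) auto
  then show ?thesis
    by (subst (asm) has_vector_derivative_within_open) (auto simp: d_def)
qed

lemma interval_integral_le_const:
  fixes f :: "real \<Rightarrow> real"
  assumes "a \<le> b" and "\<And>u. f u \<le> c" and "0 \<le> c"
  shows "(LBINT u=ereal a..ereal b. f u) \<le> c * (b - a)"
proof (cases "interval_lebesgue_integrable lborel (ereal a) (ereal b) f")
  case True
  have "(LBINT u=ereal a..ereal b. f u) = (LINT u:einterval a b|lborel. f u)"
    using \<open>a \<le> b\<close> by (simp add: interval_lebesgue_integral_le_eq)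
  also have "\<dots> \<le> (LINT u:einterval a b|lborel. c)"
    using True interval_integral_const(1)[of a b c] assms
    by (intro set_integral_mono) (auto simp: interval_lebesgue_integrable_def)
  also have "\<dots> = c * (b - a)"
    using interval_integral_const(2)[of c a b] assms
      interval_lebesgue_integral_le_eq[of "ereal a" "ereal b" lborel "\<lambda>_. c"]
    by simp
  finally show ?thesis .
next
  case False
  then show ?thesis
    using assms
    by (simp add: interval_lebesgue_integral_def interval_lebesgue_integrable_def set_lebesgue_integral_def
        set_integrable_def not_integrable_integral_eq)
qed

lemma (in prob_space) integral_le_const_nonneg:
  fixes f :: "'a \<Rightarrow> real"
  assumes "\<And>x. f x \<le> c" and "0 \<le> c"
  shows "(\<integral>x. f x \<partial>M) \<le> c"
  using assms integral_le_const[of f c] not_integrable_integral_eq[of M f]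
  by (cases "integrable M f") auto

lemma bij_if_derivative_ge_pos:
  fixes F k :: "real \<Rightarrow> real"
  assumes F': "\<And>x. (F has_real_derivative k x) (at x)"
    and k_ge: "\<And>x. c \<le> k x" and c_pos: "c > 0"
  shows "bij F"
proof (rule bijI)
  have growth: "F a + c * (b - a) \<le> F b" if "a \<le> b" for a b
  proof -
    have "((\<lambda>x. F x - c * x) has_real_derivative k x - c) (at x)" for x
      using F'[of x] by (auto intro!: derivative_eq_intros)
    then have "(\<lambda>x. F x - c * x) a \<le> (\<lambda>x. F x - c * x) b"
      by (intro DERIV_nonneg_imp_nondecreasing[OF that]) (use k_ge in \<open>force\<close>)
    then show ?thesis by (simp add: algebra_simps)
  qed
  have "strict_mono F"
  proof
    fix a b :: real assume "a < b"
    then have "0 < c * (b - a)" using c_pos by simp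
    then show "F a < F b" using growth[of a b] \<open>a < b\<close> by linarith
  qed
  then show "inj F" by (rule strict_mono_imp_inj_on)
  have "y \<in> range F" for y
  proof -
    define b where "b = (\<bar>y\<bar> + \<bar>F 0\<bar>) / c"
    have b: "0 \<le> b" "c * b = \<bar>y\<bar> + \<bar>F 0\<bar>" using c_pos by (auto simp: b_def)
    have "F (-b) \<le> y" "y \<le> F b" using growth[of "-b" 0] growth[of 0 b] b by auto
    moreover have "isCont F x" for x using F' by (rule DERIV_isCont)
    ultimately obtain x where "F x = y" using IVT[of F "-b" y b] b by auto
    then show ?thesis by auto
  qed
  then show "surj F" by auto
qed

lemma has_real_derivative_inv:
  fixes F k :: "real \<Rightarrow> real"
  assumes "bij F" and F': "\<And>x. (F has_real_derivative k x) (at x)" and "k (inv F y) \<noteq> 0"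
  shows "(inv F has_real_derivative inverse (k (inv F y))) (at y)"
proof -
  have F_inv: "F (inv F z) = z" for z
    using bij_is_surj[OF \<open>bij F\<close>] by (rule surj_f_inv_f)
  have inv_F: "inv F (F z) = z" for z
    using bij_is_inj[OF \<open>bij F\<close>] by (rule inv_f_f)
  have "isCont (inv F) (F (inv F y))"
    by (rule isCont_inverse_function[where d=1]) (simp_all add: inv_F DERIV_isCont[OF F'])
  then have "isCont (inv F) y"
    by (simp only: F_inv)
  then show ?thesis
    by (intro DERIV_inverse_function[where f=F and a="y - 1" and b="y + 1"])
       (simp_all add: F' F_inv assms(3))
qed

lemma lipschitz_on_DERIV_abs_le:
  fixes f :: "real \<Rightarrow> real"
  assumes "C-lipschitz_on UNIV f" and "(f has_real_derivative D) (at x)"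
  shows "\<bar>D\<bar> \<le> C"
proof (rule tendsto_upperbound)
  show "((\<lambda>h. \<bar>(f (x + h) - f x) / h\<bar>) \<longlongrightarrow> \<bar>D\<bar>) (at 0)"
    using assms(2) by (intro tendsto_rabs) (simp add: DERIV_def)
  have "\<bar>f (x + h) - f x\<bar> \<le> C * \<bar>h\<bar>" for h
    using lipschitz_onD[OF assms(1), of "x + h" x] by (simp add: dist_real_def)
  then show "\<forall>\<^sub>F h in at 0. \<bar>(f (x + h) - f x) / h\<bar> \<le> C"
    by (auto simp: eventually_at_filter abs_divide divide_le_eq)
qed simp

lemma bdd_below_range_if_confining:
  fixes V :: "real \<Rightarrow> real"
  assumes V': "\<And>x. (V has_real_derivative V' x) (at x)"
    and confining: "\<And>x. \<bar>x\<bar> \<ge> R \<Longrightarrow> - sgn x * V' x \<le> - \<beta> * \<bar>x\<bar>" and "\<beta> > 0" and "R > 0"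
  shows "bdd_below (range V)"
proof -
  have "continuous_on {-R..R} V"
    by (rule continuous_at_imp_continuous_on) (use V' DERIV_isCont in blast)
  moreover have "{-R..R} \<noteq> {}"
    using \<open>R > 0\<close> by simp
  ultimately obtain x0 where x0: "\<And>y. y \<in> {-R..R} \<Longrightarrow> V x0 \<le> V y"
    using continuous_attains_inf[of "{-R..R}" V] by blast
  have V'_nonneg: "V' z \<ge> 0" if "R \<le> z" for z
    using confining[of z] that \<open>R > 0\<close> mult_pos_pos[OF \<open>\<beta> > 0\<close>, of z] by (simp add: sgn_if)
  have V'_nonpos: "V' z \<le> 0" if "z \<le> -R" for z
    using confining[of z] that \<open>R > 0\<close> mult_pos_neg[OF \<open>\<beta> > 0\<close>, of z] by (simp add: sgn_if)
  have "V x0 \<le> V x" for x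
  proof -
    consider "x \<in> {-R..R}" | "R < x" | "x < -R"
      by fastforce
    then show ?thesis
    proof cases
      case 1
      then show ?thesis by (rule x0)
    next
      case 2
      have "\<exists>y. (V has_real_derivative y) (at t) \<and> 0 \<le> y" if "R \<le> t" for t
        using V' V'_nonneg that by blast
      then have "V R \<le> V x"
        using 2 by (intro DERIV_nonneg_imp_nondecreasing[of R x V]) auto
      then show ?thesis
        using x0[of R] \<open>R > 0\<close> by simp
    next
      case 3
      have "\<exists>y. (V has_real_derivative y) (at t) \<and> y \<le> 0" if "t \<le> -R" for t
        using V' V'_nonpos that by blast
      then have "V x \<ge> V (-R)"
        using 3 by (intro DERIV_nonpos_imp_nonincreasing[of x "-R" V]) auto
      then show ?thesis
        using x0[of "-R"] \<open>R > 0\<close> by simp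
    qed
  qed
  then show ?thesis
    by (metis bdd_belowI2)
qed

lemma periodic_add_of_int:
  assumes "\<And>x. q (x + L) = q x"
  shows "q (x + of_int n * L) = q x"
proof -
  have nat: "q (y + of_nat m * L) = q y" for y m
    by (induction m arbitrary: y) (auto simp: algebra_simps assms simp flip: add.assoc)
  show ?thesis
  proof (cases "n \<ge> 0")
    case True
    then show ?thesis using nat[of x "nat n"] by simp
  next
    case False
    then show ?thesis using nat[of "x + of_int n * L" "nat (-n)"] by simp
  qed
qed

lemma bounded_range_periodic:
  fixes q :: "real \<Rightarrow> 'a::metric_space"
  assumes "L > 0" and "continuous_on UNIV q" and "\<And>x. q (x + L) = q x"
  shows "bounded (range q)"
proof (rule bounded_subset)
  show "bounded (q ` {0..L})"
    using assms by (intro compact_imp_bounded compact_continuous_image) (auto intro: continuous_on_subset)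
  show "range q \<subseteq> q ` {0..L}"
  proof clarify
    fix x
    define n where "n = \<lfloor>x / L\<rfloor>"
    have "of_int n \<le> x / L" "x / L \<le> of_int n + 1"
      unfolding n_def by linarith+
    then have "of_int n * L \<le> x" "x \<le> of_int n * L + L"
      using \<open>L > 0\<close> by (simp_all add: field_simps)
    moreover have "q x = q (x - of_int n * L)"
      using periodic_add_of_int[of q L "x - of_int n * L" n] assms(3) by simp
    ultimately show "q x \<in> q ` {0..L}" by auto
  qed
qed

lemma deriv_periodic:
  fixes q :: "real \<Rightarrow> real"
  assumes "\<And>x. q differentiable at x" and "\<And>x. q (x + L) = q x"
  shows "deriv q (x + L) = deriv q x"
proof -
  have "(q has_real_derivative deriv q (x + L)) (at (x + L))"
    using assms(1) by (simp add: DERIV_deriv_iff_real_differentiable)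
  then have "((\<lambda>t. q (t + L)) has_real_derivative deriv q (x + L)) (at x)"
    by (simp add: DERIV_shift)
  then show ?thesis
    using assms(2) by (simp add: DERIV_imp_deriv)
qed

lemma bounded_range_deriv_deriv_periodic:
  fixes q :: "real \<Rightarrow> real"
  assumes "L > 0" and "\<And>x. q differentiable at x" and "\<And>x. deriv q differentiable at x"
    and "continuous_on UNIV (deriv (deriv q))" and "\<And>x. q (x + L) = q x"
  shows "bounded (range (deriv (deriv q)))"
  using bounded_range_periodic[OF assms(1,4) deriv_periodic[OF assms(3) deriv_periodic[OF assms(2,5)]]] .

lemma deriv_beps:
  assumes "\<And>x. deriv V differentiable at x" and "\<And>x. deriv p differentiable at x"
  shows "deriv (beps V p \<epsilon>) x = - deriv (deriv V) x - deriv (deriv p) (x / \<epsilon>) / \<epsilon>\<^sup>2"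
proof (rule DERIV_imp_deriv)
  have V'': "(deriv V has_real_derivative deriv (deriv V) x) (at x)"
    using assms(1) by (simp add: DERIV_deriv_iff_real_differentiable)
  have "(deriv p has_real_derivative deriv (deriv p) (x / \<epsilon>)) (at (x / \<epsilon>))"
    using assms(2) by (simp add: DERIV_deriv_iff_real_differentiable)
  then have p'': "((\<lambda>x. deriv p (x / \<epsilon>)) has_real_derivative deriv (deriv p) (x / \<epsilon>) * (1 / \<epsilon>)) (at x)"
    by (rule DERIV_chain2) (use DERIV_cdivide[OF DERIV_ident, of \<epsilon>] in simp)
  show "(beps V p \<epsilon> has_real_derivative - deriv (deriv V) x - deriv (deriv p) (x / \<epsilon>) / \<epsilon>\<^sup>2) (at x)"
    unfolding beps_def[abs_def]
    by (rule derivative_eq_intros V'' p'' refl)+ (simp add: power2_eq_square)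
qed

lemma Beps_le:
  assumes "\<And>x. deriv V differentiable at x" and "\<And>x. deriv p differentiable at x"
    and "\<And>x. \<bar>deriv (deriv V) x\<bar> \<le> C" and "\<And>x. \<bar>deriv (deriv p) x\<bar> \<le> P"
  shows "Beps V p \<epsilon> x \<le> (C + P / \<epsilon>\<^sup>2) / 2"
proof -
  have "deriv (deriv p) (x / \<epsilon>) / \<epsilon>\<^sup>2 \<le> P / \<epsilon>\<^sup>2"
    using assms(4)[of "x / \<epsilon>"] by (simp add: divide_right_mono abs_le_iff)
  then have "- deriv (beps V p \<epsilon>) x \<le> C + P / \<epsilon>\<^sup>2"
    using assms(3)[of x] by (simp add: deriv_beps[OF assms(1,2)] abs_le_iff)
  then show ?thesis
    unfolding Beps_def using zero_le_power2[of "beps V p \<epsilon> x"] by argo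
qed

locale scale_function =
  fixes \<sigma> :: real and V p :: "real \<Rightarrow> real"
  assumes sigma_nonzero: "\<sigma> \<noteq> 0"
    and continuous_V: "continuous_on UNIV V" and continuous_p: "continuous_on UNIV p"
    and bdd_below_V: "bdd_below (range V)" and bdd_below_p: "bdd_below (range p)"
begin

definition scale_density :: "real \<Rightarrow> real \<Rightarrow> real" where
  "scale_density \<epsilon> x = exp ((V x + p (x / \<epsilon>)) / \<sigma>\<^sup>2)"

lemma scale_density_pos: "scale_density \<epsilon> x > 0"
  by (simp add: scale_density_def)

lemma continuous_on_scale_density: "continuous_on UNIV (scale_density \<epsilon>)"
proof -
  have "continuous_on UNIV (\<lambda>x. p (x / \<epsilon>))"
    by (rule continuous_on_compose2[OF continuous_p]) (auto simp: divide_inverse intro!: continuous_intros)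
  then show ?thesis
    unfolding scale_density_def[abs_def] using sigma_nonzero
    by (intro continuous_intros continuous_V) auto
qed

lemma feps_has_real_derivative: "(feps \<sigma> V p \<epsilon> has_real_derivative scale_density \<epsilon> x) (at x)"
  using has_vector_derivative_interval_integral[OF continuous_on_scale_density[of \<epsilon>], of 0 x]
  by (simp add: feps_def[abs_def] scale_density_def has_real_derivative_iff_has_vector_derivative)

lemma scale_density_lower_bound: "\<exists>c>0. \<forall>x. c \<le> scale_density \<epsilon> x"
proof -
  obtain a b where "\<And>x. a \<le> V x" "\<And>x. b \<le> p x"
    using bdd_below_V bdd_below_p by (auto simp: bdd_below_def)
  then have "exp ((a + b) / \<sigma>\<^sup>2) \<le> scale_density \<epsilon> x" for x
    by (auto simp: scale_density_def intro!: divide_right_mono add_mono)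
  then show ?thesis by (intro exI[of _ "exp ((a + b) / \<sigma>\<^sup>2)"]) auto
qed

lemma bij_feps: "bij (feps \<sigma> V p \<epsilon>)"
  using scale_density_lower_bound[of \<epsilon>]
  by (auto intro: bij_if_derivative_ge_pos[OF feps_has_real_derivative])

lemma geps_has_real_derivative:
  "(geps \<sigma> V p \<epsilon> has_real_derivative inverse (scale_density \<epsilon> (geps \<sigma> V p \<epsilon> y))) (at y)"
  unfolding geps_def
  by (rule has_real_derivative_inv[OF bij_feps feps_has_real_derivative])
     (simp add: scale_density_pos less_imp_neq[symmetric])

lemma meps_eq: "meps \<sigma> V p \<epsilon> y = inverse (scale_density \<epsilon> (geps \<sigma> V p \<epsilon> y)) / sqrt (2 * \<sigma>\<^sup>2)"
  by (simp add: meps_def DERIV_imp_deriv[OF feps_has_real_derivative] divide_inverse)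

lemma meps_pos: "meps \<sigma> V p \<epsilon> y > 0"
  using sigma_nonzero by (simp add: meps_eq scale_density_pos)

lemma interval_integral_meps:
  "(LBINT z=ereal x..ereal y. meps \<sigma> V p \<epsilon> z) = (geps \<sigma> V p \<epsilon> y - geps \<sigma> V p \<epsilon> x) / sqrt (2 * \<sigma>\<^sup>2)"
proof -
  have D: "((\<lambda>z. geps \<sigma> V p \<epsilon> z / sqrt (2 * \<sigma>\<^sup>2)) has_real_derivative meps \<sigma> V p \<epsilon> z) (at z)" for z
    unfolding meps_eq by (intro DERIV_cdivide geps_has_real_derivative)
  have "continuous_on UNIV (geps \<sigma> V p \<epsilon>)"
    using geps_has_real_derivative
    by (intro continuous_at_imp_continuous_on) (auto intro: DERIV_isCont)
  then have "continuous_on UNIV (\<lambda>z. scale_density \<epsilon> (geps \<sigma> V p \<epsilon> z))"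
    by (rule continuous_on_compose2[OF continuous_on_scale_density]) auto
  then have "continuous_on UNIV (meps \<sigma> V p \<epsilon>)"
    unfolding meps_eq[abs_def] using scale_density_pos sigma_nonzero
    by (intro continuous_intros) (auto simp: less_imp_neq[symmetric])
  with D have "(LBINT z=ereal x..ereal y. meps \<sigma> V p \<epsilon> z)
      = geps \<sigma> V p \<epsilon> y / sqrt (2 * \<sigma>\<^sup>2) - geps \<sigma> V p \<epsilon> x / sqrt (2 * \<sigma>\<^sup>2)"
    by (intro interval_integral_FTC_finite)
       (auto intro: continuous_on_subset has_field_derivative_at_within
             simp: has_real_derivative_iff_has_vector_derivative[symmetric])
  then show ?thesis
    by (simp add: diff_divide_distrib)
qed

lemma peps_le_gaussian:
  assumes "prob_space M" and "0 < h" and B_bound: "\<And>x. Beps V p \<epsilon> x \<le> B" and "0 \<le> B"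
  shows "peps \<sigma> V p \<epsilon> M N h x y
    \<le> exp (h * B) * (meps \<sigma> V p \<epsilon> y powr (3/2) / meps \<sigma> V p \<epsilon> x powr (1/2)) * (1 / sqrt (2 * pi * h))
      * exp (- (1 / (4 * \<sigma>\<^sup>2 * h)) * (geps \<sigma> V p \<epsilon> y - geps \<sigma> V p \<epsilon> x)\<^sup>2)"
proof -
  let ?m = "meps \<sigma> V p \<epsilon>" and ?g = "geps \<sigma> V p \<epsilon>"
  let ?A = "(?m y powr (3/2) / ?m x powr (1/2)) * (1 / sqrt (2 * pi * h))"
  let ?G = "exp (- (1 / (4 * \<sigma>\<^sup>2 * h)) * (?g y - ?g x)\<^sup>2)"
  let ?E = "\<integral>\<omega>. exp (h * (LBINT u=ereal 0..ereal 1. Beps V p \<epsilon> (N h (?g x) (?g y) u \<omega>))) \<partial>M"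
  have "(LBINT u=ereal 0..ereal 1. Beps V p \<epsilon> (N h (?g x) (?g y) u \<omega>)) \<le> B" for \<omega>
    using interval_integral_le_const[of 0 1 "\<lambda>u. Beps V p \<epsilon> (N h (?g x) (?g y) u \<omega>)" B] B_bound \<open>0 \<le> B\<close>
    by simp
  then have E_le: "?E \<le> exp (h * B)"
    using \<open>0 < h\<close> by (intro prob_space.integral_le_const_nonneg[OF assms(1)]) simp_all
  have "(LBINT z=ereal x..ereal y. ?m z)\<^sup>2 = (?g y - ?g x)\<^sup>2 / (2 * \<sigma>\<^sup>2)"
    by (simp add: interval_integral_meps power_divide)
  then have gaussian: "exp (- (1 / (2 * h)) * (LBINT z=ereal x..ereal y. ?m z)\<^sup>2) = ?G"
    by simp
  have prefactor: "?m y / sqrt (2 * pi * h) * sqrt (?m y / ?m x) = ?A"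
  proof -
    have "?m y powr (3/2) = ?m y powr (1 + 1/2)"
      by simp
    also have "\<dots> = ?m y powr 1 * ?m y powr (1/2)"
      by (rule powr_add)
    also have "\<dots> = ?m y * sqrt (?m y)"
      using meps_pos[of \<epsilon> y] by (simp add: powr_half_sqrt)
    finally show ?thesis
      using meps_pos[of \<epsilon> x] by (simp add: powr_half_sqrt real_sqrt_divide)
  qed
  have "peps \<sigma> V p \<epsilon> M N h x y = (?A * ?G) * ?E"
    unfolding peps_def gaussian prefactor by simp
  also have "\<dots> \<le> (?A * ?G) * exp (h * B)"
    using \<open>0 < h\<close> by (intro mult_left_mono[OF E_le] mult_nonneg_nonneg divide_nonneg_nonneg) auto
  finally show ?thesis
    by (simp add: ac_simps)
qed

end

lemma scale_function_if_confining_periodic: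
  assumes "\<sigma> \<noteq> 0" and "L > 0"
    and V': "\<And>x. (V has_real_derivative V' x) (at x)"
    and "\<beta> > 0" and "R > 0" and "\<And>x. \<bar>x\<bar> \<ge> R \<Longrightarrow> - sgn x * V' x \<le> - \<beta> * \<bar>x\<bar>"
    and "continuous_on UNIV p" and "\<And>x. p (x + L) = p x"
  shows "scale_function \<sigma> V p"
proof
  show "continuous_on UNIV V"
    using V' by (intro continuous_at_imp_continuous_on) (blast intro: DERIV_isCont)
  show "bdd_below (range V)"
    using assms by (intro bdd_below_range_if_confining[OF V'])
  show "bdd_below (range p)"
    using assms by (intro bounded_imp_bdd_below bounded_range_periodic)
qed (use assms in auto)

lemma gaussian_bound_mono:
  fixes \<kappa> K K1 \<epsilon> \<sigma> a b G Q :: real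
  assumes "\<kappa> \<le> K" and "0 \<le> a" and "0 \<le> b" and "0 \<le> K1" and "K1 * \<epsilon>^4 < 2" and "0 \<le> Q"
  shows "exp \<kappa> * a * b * exp (- (1 / (4 * \<sigma>\<^sup>2 * \<epsilon>\<^sup>2)) * Q)
    \<le> exp K * sqrt (2 / (2 - K1 * \<epsilon>^4)) * exp (2 * K1 * \<epsilon>\<^sup>2 * G\<^sup>2) * a * b
      * exp (- ((1 - 8 * K1 * \<sigma>\<^sup>2 * \<epsilon>^4) / (4 * \<sigma>\<^sup>2 * \<epsilon>\<^sup>2)) * Q)"
proof -
  let ?E = "exp (- ((1 - 8 * K1 * \<sigma>\<^sup>2 * \<epsilon>^4) / (4 * \<sigma>\<^sup>2 * \<epsilon>\<^sup>2)) * Q)"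
  have "(1 - 8 * K1 * \<sigma>\<^sup>2 * \<epsilon>^4) / (4 * \<sigma>\<^sup>2 * \<epsilon>\<^sup>2) \<le> 1 / (4 * \<sigma>\<^sup>2 * \<epsilon>\<^sup>2)"
    using \<open>0 \<le> K1\<close> by (intro divide_right_mono) auto
  then have "(1 - 8 * K1 * \<sigma>\<^sup>2 * \<epsilon>^4) / (4 * \<sigma>\<^sup>2 * \<epsilon>\<^sup>2) * Q \<le> 1 / (4 * \<sigma>\<^sup>2 * \<epsilon>\<^sup>2) * Q"
    using \<open>0 \<le> Q\<close> by (rule mult_right_mono)
  then have "exp (- (1 / (4 * \<sigma>\<^sup>2 * \<epsilon>\<^sup>2)) * Q) \<le> ?E"
    by simp
  then have "exp \<kappa> * a * b * exp (- (1 / (4 * \<sigma>\<^sup>2 * \<epsilon>\<^sup>2)) * Q) \<le> exp K * a * b * ?E"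
    using assms by (intro mult_mono) auto
  also have "\<dots> \<le> exp K * sqrt (2 / (2 - K1 * \<epsilon>^4)) * exp (2 * K1 * \<epsilon>\<^sup>2 * G\<^sup>2) * a * b * ?E"
  proof -
    have "0 \<le> K1 * \<epsilon>^4"
      using \<open>0 \<le> K1\<close> by simp
    then have "1 \<le> 2 / (2 - K1 * \<epsilon>^4)"
      using \<open>K1 * \<epsilon>^4 < 2\<close> by (simp add: le_divide_eq)
    then have "1 * 1 \<le> sqrt (2 / (2 - K1 * \<epsilon>^4)) * exp (2 * K1 * \<epsilon>\<^sup>2 * G\<^sup>2)"
      using \<open>0 \<le> K1\<close> \<open>K1 * \<epsilon>^4 < 2\<close> by (intro mult_mono) auto
    from mult_left_mono[OF this, of "exp K * a * b * ?E"] show ?thesis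
      using assms by (simp add: ac_simps)
  qed
  finally show ?thesis .
qed

theorem lemma4p20:
  fixes L \<sigma> :: real and V p :: "real \<Rightarrow> real"
    and M :: "'a measure" and N :: "real \<Rightarrow> real \<Rightarrow> real \<Rightarrow> real \<Rightarrow> 'a \<Rightarrow> real"
  assumes L_pos: "L > 0" and sigma_pos: "\<sigma> > 0"
    and V_C2: "\<forall>x. V differentiable at x" "\<forall>x. deriv V differentiable at x"
              "continuous_on UNIV (deriv (deriv V))"
    and p_C2: "\<forall>x. p differentiable at x" "\<forall>x. deriv p differentiable at x"
              "continuous_on UNIV (deriv (deriv p))"
    and V0: "V 0 = 0" and p0: "p 0 = 0"
    and p_periodic: "\<forall>x. p (x + L) = p x"
    and V'_lipschitz: "\<exists>C. C-lipschitz_on UNIV (deriv V)"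
    and V_confining: "\<exists>\<beta>>0. \<exists>R\<ge>1. \<forall>x. \<bar>x\<bar> \<ge> R \<longrightarrow> - sgn x * deriv V x \<le> - \<beta> * \<bar>x\<bar>"
    and M_prob: "prob_space M"
    and N_meas: "\<forall>h>0. \<forall>a b. (\<lambda>(u, \<omega>). N h a b u \<omega>) \<in> borel_measurable (lborel \<Otimes>\<^sub>M M)"
    and N_law: "\<forall>h>0. \<forall>a b. \<forall>u\<in>{0<..<1}.
                  distributed M lborel (N h a b u) (normal_density (a + u * (b - a)) (sqrt (h * u * (1 - u))))"
  shows "\<exists>K1>0. \<exists>K2>0. \<exists>\<epsilon>0>0. \<forall>\<epsilon>. 0 < \<epsilon> \<and> \<epsilon> < \<epsilon>0 \<and> K1 * \<epsilon>^4 < min 2 (1 / (8 * \<sigma>\<^sup>2)) \<longrightarrow>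
     (\<forall>x y. peps \<sigma> V p \<epsilon> M N (\<epsilon>\<^sup>2) x y
        \<le> exp (K2 / 2) * sqrt (2 / (2 - K1 * \<epsilon>^4))
          * exp (2 * K1 * \<epsilon>\<^sup>2 * (geps \<sigma> V p \<epsilon> x)\<^sup>2)
          * (meps \<sigma> V p \<epsilon> y powr (3/2) / meps \<sigma> V p \<epsilon> x powr (1/2))
          * (1 / sqrt (2 * pi * \<epsilon>\<^sup>2))
          * exp (- ((1 - 8 * K1 * \<sigma>\<^sup>2 * \<epsilon>^4) / (4 * \<sigma>\<^sup>2 * \<epsilon>\<^sup>2))
                 * (geps \<sigma> V p \<epsilon> y - geps \<sigma> V p \<epsilon> x)\<^sup>2))"
proof -
  have V': "(V has_real_derivative deriv V x) (at x)" for x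
    using V_C2(1) by (simp add: DERIV_deriv_iff_real_differentiable)
  have V'_diff: "\<And>x. deriv V differentiable at x" and p'_diff: "\<And>x. deriv p differentiable at x"
    using V_C2(2) p_C2(2) by blast+
  obtain C where C: "C-lipschitz_on UNIV (deriv V)"
    using V'_lipschitz by blast
  have V''_bound: "\<bar>deriv (deriv V) x\<bar> \<le> C" for x
    using V'_diff by (intro lipschitz_on_DERIV_abs_le[OF C, where x=x])
      (simp add: DERIV_deriv_iff_real_differentiable)
  obtain P where p''_bound: "\<And>x. \<bar>deriv (deriv p) x\<bar> \<le> P"
    using bounded_range_deriv_deriv_periodic[OF L_pos _ p'_diff p_C2(3)] p_C2(1) p_periodic
    by (auto simp: bounded_real)
  obtain \<beta> R where "\<beta> > 0" "R \<ge> 1" "\<And>x. \<bar>x\<bar> \<ge> R \<Longrightarrow> - sgn x * deriv V x \<le> - \<beta> * \<bar>x\<bar>"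
    using V_confining by blast
  moreover have "continuous_on UNIV p"
    using p_C2(1) by (auto intro!: differentiable_imp_continuous_on differentiable_at_imp_differentiable_on)
  ultimately interpret scale_function \<sigma> V p
    using sigma_pos p_periodic
    by (intro scale_function_if_confining_periodic[OF _ L_pos V', where \<beta>=\<beta> and R=R]) auto
  have C_nonneg: "0 \<le> C" and P_nonneg: "0 \<le> P"
    using lipschitz_on_nonneg[OF C] p''_bound[of 0] by auto
  define K2 where "K2 = C + P + 1"
  have exponent_le: "\<epsilon>\<^sup>2 * ((C + P / \<epsilon>\<^sup>2) / 2) \<le> K2 / 2" if "0 < \<epsilon>" "\<epsilon> < 1" for \<epsilon> :: real
  proof -
    have "\<epsilon>\<^sup>2 * ((C + P / \<epsilon>\<^sup>2) / 2) = (\<epsilon>\<^sup>2 * C + P) / 2"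
      using \<open>0 < \<epsilon>\<close> by (simp add: field_simps)
    also have "\<dots> \<le> K2 / 2"
      using mult_left_le_one_le[OF C_nonneg, of "\<epsilon>\<^sup>2"] that by (simp add: K2_def power_le_one)
    finally show ?thesis .
  qed
  show ?thesis
    using C_nonneg P_nonneg meps_pos exponent_le
    by (intro exI[of _ "1::real"] exI[of _ K2] conjI allI impI
          order_trans[OF peps_le_gaussian[OF M_prob _ Beps_le[OF V'_diff p'_diff V''_bound p''_bound]]
            gaussian_bound_mono])
       (auto simp: K2_def)
qed

end
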